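(* Let $(X,d)$ be a metric space, $x\in X$, $A$ a complex Banach algebra and $\varphi\in\Delta(A)$. Let $D:Lip_dX\to\mathbb{C}$ be a bounded linear functional, and define $D_\varphi:Lip_d(X,A)\to\mathbb{C}$ by $D_\varphi(f)=D(\varphi\circ f)$. Then the following are equivalent: (i) $D$ is a point derivation at $x$, i.e. $D(fg)=f(x)D(g)+g(x)D(f)$ for all $f,g\in Lip_dX$; (ii) $D_\varphi$ is an $(x,\varphi)$-point derivation on $Lip_d(X,A)$, i.e. $D_\varphi(fg)=\varphi(f(x))D_\varphi(g)+\varphi(g(x))D_\varphi(f)$ for all $f,g\in Lip_d(X,A)$.
   Context: For a Banach algebra $A$, $Lip_d(X,A)$ is the Banach algebra (pointwise operations) of bounded functions $f:X\to A$ with $P_{d,A}(f)=\sup_{x\neq y}\|f(x)-f(y)\|_A/d(x,y)<\infty$, normed by $\|f\|_{\infty,A}+P_{d,A}(f)$; $Lip_dX=Lip_d(X,\mathbb{C})$. $\Delta(A)$ is the set of nonzero multiplicative linear functionals on $A$ (for $f\in Lip_d(X,A)$, $\varphi\circ f\in Lip_dX$). *)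

theory Defs
  imports "HOL-Analysis.Analysis"
begin

text \<open>Complex Banach algebras (not necessarily unital): a real Banach algebra
  (submultiplicative norm, complete) equipped with a complex scalar multiplication
  extending the real one, compatible with the norm and the multiplication.\<close>

class complex_banach_algebra = real_normed_algebra + banach +
  fixes scaleC :: "complex \<Rightarrow> 'a \<Rightarrow> 'a" (infixr \<open>*\<^sub>C\<close> 75)
  assumes scaleC_add_right: "a *\<^sub>C (x + y) = a *\<^sub>C x + a *\<^sub>C y"
    and scaleC_add_left: "(a + b) *\<^sub>C x = a *\<^sub>C x + b *\<^sub>C x"
    and scaleC_scaleC: "a *\<^sub>C (b *\<^sub>C x) = (a * b) *\<^sub>C x"
    and scaleC_one: "1 *\<^sub>C x = x"
    and scaleC_of_real: "complex_of_real r *\<^sub>C x = r *\<^sub>R x"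
    and norm_scaleC: "norm (a *\<^sub>C x) = cmod a * norm x"
    and scaleC_mult_left: "(a *\<^sub>C x) * y = a *\<^sub>C (x * y)"
    and scaleC_mult_right: "x * (a *\<^sub>C y) = a *\<^sub>C (x * y)"

definition Lip :: "('a::metric_space \<Rightarrow> 'b::real_normed_vector) set" where
  "Lip = {f. bounded (range f) \<and> (\<exists>L. \<forall>x y. norm (f x - f y) \<le> L * dist x y)}"

definition lip_const :: "('a::metric_space \<Rightarrow> 'b::real_normed_vector) \<Rightarrow> real" where
  "lip_const f = (SUP p \<in> {p. fst p \<noteq> snd p}. norm (f (fst p) - f (snd p)) / dist (fst p) (snd p))"

definition lip_norm :: "('a::metric_space \<Rightarrow> 'b::real_normed_vector) \<Rightarrow> real" where
  "lip_norm f = (SUP x. norm (f x)) + lip_const f"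

definition bounded_lin_functional :: "(('a::metric_space \<Rightarrow> complex) \<Rightarrow> complex) \<Rightarrow> bool" where
  "bounded_lin_functional D \<longleftrightarrow>
     (\<forall>f\<in>Lip. \<forall>g\<in>Lip. D (\<lambda>t. f t + g t) = D f + D g) \<and>
     (\<forall>f\<in>Lip. \<forall>c. D (\<lambda>t. c * f t) = c * D f) \<and>
     (\<exists>C. \<forall>f\<in>Lip. cmod (D f) \<le> C * lip_norm f)"

definition char_space :: "('b::complex_banach_algebra \<Rightarrow> complex) set" where
  "char_space = {\<phi>. (\<forall>a b. \<phi> (a + b) = \<phi> a + \<phi> b) \<and> (\<forall>c a. \<phi> (c *\<^sub>C a) = c * \<phi> a)
                    \<and> (\<forall>a b. \<phi> (a * b) = \<phi> a * \<phi> b) \<and> (\<exists>a. \<phi> a \<noteq> 0)}"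

definition point_derivation :: "'a::metric_space \<Rightarrow> (('a \<Rightarrow> complex) \<Rightarrow> complex) \<Rightarrow> bool" where
  "point_derivation x D \<longleftrightarrow>
     (\<forall>f\<in>Lip. \<forall>g\<in>Lip. D (\<lambda>t. f t * g t) = f x * D g + g x * D f)"

definition phi_point_derivation ::
  "'a::metric_space \<Rightarrow> ('b::complex_banach_algebra \<Rightarrow> complex) \<Rightarrow> (('a \<Rightarrow> 'b) \<Rightarrow> complex) \<Rightarrow> bool" where
  "phi_point_derivation x \<phi> T \<longleftrightarrow>
     (\<forall>f\<in>Lip. \<forall>g\<in>Lip. T (\<lambda>t. f t * g t) = \<phi> (f x) * T g + \<phi> (g x) * T f)"

end

theory Submission
  imports Defs
begin

text \<open>Composition with a character turns a vector-valued Lipschitz function into a scalar one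
  and respects products, which gives (i) \<open>\<Longrightarrow>\<close> (ii). Conversely, fixing \<open>a\<close> with
  \<open>\<phi> a = 1\<close>, every scalar Lipschitz function \<open>f\<close> is recovered as \<open>\<phi> \<circ> (f \<cdot> a)\<close>, so applying (ii)
  to \<open>f \<cdot> a\<close> and \<open>g \<cdot> a\<close> gives (i). The only analytic input is that characters are contractive,
  \<open>|\<phi> a| \<le> \<parallel>a\<parallel>\<close>: otherwise some \<open>c\<close> with \<open>\<parallel>c\<parallel> < 1\<close> has \<open>\<phi> c = 1\<close>, and the Neumann series
  \<open>b = \<Sum>\<^sub>n c\<^sup>n\<^sup>+\<^sup>1\<close> satisfies \<open>b = c + c b\<close>, whence \<open>\<phi> b = 1 + \<phi> b\<close>.\<close>

lemma Lip_bounded_linear_comp: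
  fixes h :: "'b::real_normed_vector \<Rightarrow> 'c::real_normed_vector" and f :: "'a::metric_space \<Rightarrow> 'b"
  assumes h: "bounded_linear h" and f: "f \<in> Lip"
  shows "h \<circ> f \<in> Lip"
proof -
  from f obtain L where L: "\<And>s t. norm (f s - f t) \<le> L * dist s t" and "bounded (range f)"
    unfolding Lip_def by auto
  then have "bounded (range (h \<circ> f))"
    using bounded_linear_image[OF _ h] by (metis image_comp)
  moreover obtain K where K: "\<And>u. norm (h u) \<le> norm u * K" "K > 0"
    using bounded_linear.pos_bounded[OF h] by blast
  have "norm ((h \<circ> f) s - (h \<circ> f) t) \<le> (L * K) * dist s t" for s t
  proof -
    have "norm ((h \<circ> f) s - (h \<circ> f) t) = norm (h (f s - f t))"
      by (simp add: linear_diff[OF bounded_linear.linear[OF h]])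
    also have "\<dots> \<le> norm (f s - f t) * K" by (rule K(1))
    also have "\<dots> \<le> L * dist s t * K" using L[of s t] K(2) by (simp add: mult_right_mono)
    finally show ?thesis by (simp add: ac_simps)
  qed
  ultimately show ?thesis unfolding Lip_def by blast
qed

text \<open>\<open>succ_pow n c = c\<^sup>n\<^sup>+\<^sup>1\<close>; the algebra need not have a unit, so \<open>c\<^sup>0\<close> is not available.\<close>
primrec succ_pow :: "nat \<Rightarrow> 'a::real_normed_algebra \<Rightarrow> 'a" where
  "succ_pow 0 c = c"
| "succ_pow (Suc n) c = c * succ_pow n c"

lemma norm_succ_pow_le: "norm (succ_pow n c) \<le> norm c ^ Suc n"
proof (induction n)
  case 0
  then show ?case by simp
next
  case (Suc n)
  have "norm (succ_pow (Suc n) c) \<le> norm c * norm (succ_pow n c)"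
    by (simp add: norm_mult_ineq)
  also have "\<dots> \<le> norm c * norm c ^ Suc n"
    using Suc by (simp add: mult_left_mono)
  finally show ?case by simp
qed

lemma additive_multiplicative_neq_one_in_unit_ball:
  fixes c :: "'a::{real_normed_algebra, banach}" and \<phi> :: "'a \<Rightarrow> 'k::ring_1"
  assumes add: "\<And>a b. \<phi> (a + b) = \<phi> a + \<phi> b"
    and mult: "\<And>a b. \<phi> (a * b) = \<phi> a * \<phi> b"
    and "norm c < 1"
  shows "\<phi> c \<noteq> 1"
proof
  assume c: "\<phi> c = 1"
  have "summable (\<lambda>n. norm c ^ Suc n)"
    using \<open>norm c < 1\<close> by (simp add: summable_geometric)
  then have "summable (\<lambda>n. norm (succ_pow n c))"
    by (rule summable_comparison_test') (use norm_succ_pow_le in \<open>simp del: power_Suc\<close>)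
  then have sums: "summable (\<lambda>n. succ_pow n c)"
    by (rule summable_norm_cancel)
  define b where "b = (\<Sum>n. succ_pow n c)"
  have "b = succ_pow 0 c + (\<Sum>n. succ_pow (Suc n) c)"
    unfolding b_def using suminf_split_head[OF sums] by simp
  also have "(\<Sum>n. succ_pow (Suc n) c) = c * b"
    unfolding b_def by (simp add: suminf_mult[OF sums])
  finally have "\<phi> b = 1 + \<phi> b"
    using add mult c by (metis succ_pow.simps(1) mult_1)
  then show False by simp
qed

context
  fixes \<phi> :: "'b::complex_banach_algebra \<Rightarrow> complex"
  assumes \<phi>: "\<phi> \<in> char_space"
begin

lemma char_add: "\<phi> (a + b) = \<phi> a + \<phi> b"
  and char_scaleC: "\<phi> (c *\<^sub>C a) = c * \<phi> a"
  and char_mult: "\<phi> (a * b) = \<phi> a * \<phi> b"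
  using \<phi> unfolding char_space_def by auto

lemma char_obtain_eq_one:
  obtains a where "\<phi> a = 1"
proof -
  obtain a0 where "\<phi> a0 \<noteq> 0"
    using \<phi> unfolding char_space_def by auto
  then have "\<phi> (inverse (\<phi> a0) *\<^sub>C a0) = 1"
    by (simp add: char_scaleC)
  then show thesis by (rule that)
qed

lemma norm_char_le: "cmod (\<phi> a) \<le> norm a"
proof (rule ccontr)
  assume "\<not> cmod (\<phi> a) \<le> norm a"
  then have gt: "norm a < cmod (\<phi> a)" and nz: "\<phi> a \<noteq> 0"
    by auto
  define c where "c = inverse (\<phi> a) *\<^sub>C a"
  have "norm c = norm a / cmod (\<phi> a)"
    unfolding c_def norm_scaleC by (simp add: norm_inverse divide_inverse_commute)
  with gt nz have "norm c < 1" by simp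
  moreover have "\<phi> c = 1"
    unfolding c_def using nz by (simp add: char_scaleC)
  ultimately show False
    using additive_multiplicative_neq_one_in_unit_ball[OF char_add char_mult] by blast
qed

lemma bounded_linear_char: "bounded_linear \<phi>"
proof
  show "\<phi> (a + b) = \<phi> a + \<phi> b" for a b by (rule char_add)
  show "\<phi> (r *\<^sub>R a) = r *\<^sub>R \<phi> a" for r a
    by (metis char_scaleC scaleC_of_real scaleR_conv_of_real)
  show "\<exists>K. \<forall>a. norm (\<phi> a) \<le> norm a * K"
    using norm_char_le by (metis mult.right_neutral norm_complex_def)
qed

lemma char_comp_Lip: "f \<in> Lip \<Longrightarrow> \<phi> \<circ> f \<in> Lip"
  by (rule Lip_bounded_linear_comp[OF bounded_linear_char])

end

lemma bounded_linear_scaleC_left: "bounded_linear (\<lambda>z. z *\<^sub>C a)"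
proof
  show "(z + w) *\<^sub>C a = z *\<^sub>C a + w *\<^sub>C a" for z w by (rule scaleC_add_left)
  show "(r *\<^sub>R z) *\<^sub>C a = r *\<^sub>R (z *\<^sub>C a)" for r z
    by (metis scaleC_of_real scaleC_scaleC scaleR_conv_of_real)
  show "\<exists>K. \<forall>z. norm (z *\<^sub>C a) \<le> norm z * K"
    by (metis norm_scaleC order_refl)
qed

theorem theorem2p17:
  fixes x :: "'a::metric_space"
    and \<phi> :: "'b::complex_banach_algebra \<Rightarrow> complex"
    and D :: "('a \<Rightarrow> complex) \<Rightarrow> complex"
  assumes "\<phi> \<in> char_space"
    and "bounded_lin_functional D"
  shows "point_derivation x D \<longleftrightarrow> phi_point_derivation x \<phi> (\<lambda>f. D (\<phi> \<circ> f))"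
proof
  assume pd: "point_derivation x D"
  show "phi_point_derivation x \<phi> (\<lambda>f. D (\<phi> \<circ> f))"
    unfolding phi_point_derivation_def
  proof (intro ballI)
    fix f g :: "'a \<Rightarrow> 'b"
    assume "f \<in> Lip" "g \<in> Lip"
    then have "D (\<lambda>t. (\<phi> \<circ> f) t * (\<phi> \<circ> g) t) =
        (\<phi> \<circ> f) x * D (\<phi> \<circ> g) + (\<phi> \<circ> g) x * D (\<phi> \<circ> f)"
      using pd char_comp_Lip[OF assms(1)] unfolding point_derivation_def by blast
    then show "D (\<phi> \<circ> (\<lambda>t. f t * g t)) = \<phi> (f x) * D (\<phi> \<circ> g) + \<phi> (g x) * D (\<phi> \<circ> f)"
      by (simp add: comp_def char_mult[OF assms(1)])
  qed
next
  assume pd: "phi_point_derivation x \<phi> (\<lambda>f. D (\<phi> \<circ> f))"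
  obtain a where a: "\<phi> a = 1"
    using char_obtain_eq_one[OF assms(1)] by blast
  let ?lift = "\<lambda>f t. f t *\<^sub>C a"
  have lift_Lip: "?lift f \<in> Lip" if "f \<in> Lip" for f :: "'a \<Rightarrow> complex"
    using Lip_bounded_linear_comp[OF bounded_linear_scaleC_left that] by (simp add: o_def)
  have char_lift: "\<phi> (?lift f t) = f t" for f t
    by (simp add: char_scaleC[OF assms(1)] a)
  show "point_derivation x D"
    unfolding point_derivation_def
  proof (intro ballI)
    fix f g :: "'a \<Rightarrow> complex"
    assume "f \<in> Lip" "g \<in> Lip"
    then have "D (\<phi> \<circ> (\<lambda>t. ?lift f t * ?lift g t)) =
        \<phi> (?lift f x) * D (\<phi> \<circ> ?lift g) + \<phi> (?lift g x) * D (\<phi> \<circ> ?lift f)"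
      using pd lift_Lip unfolding phi_point_derivation_def by (elim ballE) (auto simp only:)
    then show "D (\<lambda>t. f t * g t) = f x * D g + g x * D f"
      by (simp add: o_def char_mult[OF assms(1)] char_lift)
  qed
qed

end
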